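(* In the infinite-sites model described in the context, for every generation $\tau\ge 0$ the expected phenotypic mean and expected phenotypic variance satisfy \[ \bar G(\tau)=\Theta\int_0^\infty \alpha f(\alpha)\int_0^\tau\bigl(1-P_{\mathrm{lost}}([t],e^{s\alpha})\bigr)\,\gamma_1\bigl(a(t,e^{s\alpha},N)\bigr)\,dt\,d\alpha \] and \[ V_G(\tau)=\Theta\int_0^\infty \alpha^2 f(\alpha)\int_0^\tau\bigl(1-P_{\mathrm{lost}}([t],e^{s\alpha})\bigr)\,\gamma\bigl(a(t,e^{s\alpha},N)\bigr)\,dt\,d\alpha . \] In particular, $\Theta$ enters both quantities only as a multiplicative factor.
   Context: A haploid population of size $N$ starts monomorphic at generation $\tau=0$. For $\tau>0$, mutations occur at new sites (infinite sites) according to a Poisson process with rate $\Theta>0$ per generation, so the number of mutations in $(0,\tau]$ is Poisson with mean $\Theta\tau$; write $\mathrm{Poi}_{\Theta\tau}(n)=e^{-\Theta\tau}(\Theta\tau)^n/n!$. Each mutation has trait effect $\alpha>0$ drawn independently from a probability density $f$ on $(0,\infty)$ with finite moments, and fitness $\sigma=e^{s\alpha}$ with $s>0$. Sites are in linkage equilibrium (frequencies at different sites independent). For $\sigma>1$, consider a Galton–Watson process started from one individual with offspring mean $\sigma$; $P_{\mathrm{lost}}(n,\sigma)$ is the probability it is extinct by generation $n$ ($P_{\mathrm{lost}}(0,\sigma)=0$). $[t]$ is the integer part of $t$. $E_1(a)=\int_a^\infty x^{-1}e^{-x}dx$. For $a>0$, $g_a(x)=a(1-x)^{-2}\exp(-ax/(1-x))$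 on $[0,1)$, with $\gamma_1(a)=\int_0^1 x g_a(x)dx=1-ae^aE_1(a)$ and $\gamma(a)=\int_0^1x(1-x)g_a(x)dx=a(1+a)e^aE_1(a)-a$. Set $a(t,\sigma,N)=N(1-P_{\mathrm{lost}}([t],\sigma))\sigma^{-t}$. Given $n$ mutations in $(0,\tau]$ (arrival times distributed as a Poisson process conditioned on $n$ events), the $i$-th mutation, with effect $\alpha_i$ and arrival time $\tau_i$, has frequency $\tilde X^{(i)}_{\tau,e^{s\alpha_i},\Theta}$ in generation $\tau$, a random variable equal to $0$ with probability $P_{\mathrm{lost}}([\tau-\tau_i],e^{s\alpha_i})$ and otherwise having density $g_{a(\tau-\tau_i,e^{s\alpha_i},N)}$. The expected phenotypic mean and variance are defined by $\bar G(\tau)=\sum_{n\ge1}\mathrm{Poi}_{\Theta\tau}(n)\sum_{i=1}^n\int_0^\infty\alpha_i\,\mathbb E[\tilde X^{(i)}_{\tau,e^{s\alpha_i},\Theta}]f(\alpha_i)d\alpha_i$ and $V_G(\tau)=\sum_{n\ge1}\mathrm{Poi}_{\Theta\tau}(n)\sum_{i=1}^n\int_0^\infty\alpha_i^2\,\mathbb E[\tilde X^{(i)}_{\tau,e^{s\alpha_i},\Theta}(1-\tilde X^{(i)}_{\tau,e^{s\alpha_i},\Theta})]f(\alpha_i)d\alpha_i$. *)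

theory Defs
  imports "HOL-Probability.Probability"
begin

definition Poi :: "real \<Rightarrow> nat \<Rightarrow> real" where
  "Poi m n = exp (- m) * m ^ n / fact n"

text \<open>Galton--Watson process with offspring law  off sigma  (a pmf on nat with mean sigma),
  started from one individual: probability of extinction by generation n, by first-step
  analysis:  P(0) = 0,  P(n+1) = sum_k p_k P(n)^k.\<close>
fun P_lost :: "(real \<Rightarrow> nat pmf) \<Rightarrow> nat \<Rightarrow> real \<Rightarrow> real" where
  "P_lost off 0 \<sigma> = 0"
| "P_lost off (Suc n) \<sigma> = (\<Sum>k. pmf (off \<sigma>) k * (P_lost off n \<sigma>) ^ k)"

definition E1 :: "real \<Rightarrow> real" where
  "E1 a = (LINT x:{a<..}|lborel. exp (- x) / x)"

definition g_dens :: "real \<Rightarrow> real \<Rightarrow> real" where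
  "g_dens a x = a / (1 - x)^2 * exp (- a * x / (1 - x))"

definition gamma1 :: "real \<Rightarrow> real" where
  "gamma1 a = 1 - a * exp a * E1 a"

definition gammaV :: "real \<Rightarrow> real" where
  "gammaV a = a * (1 + a) * exp a * E1 a - a"

definition a_par :: "(real \<Rightarrow> nat pmf) \<Rightarrow> real \<Rightarrow> real \<Rightarrow> real \<Rightarrow> real" where
  "a_par off t \<sigma> N = N * (1 - P_lost off (nat \<lfloor>t\<rfloor>) \<sigma>) * \<sigma> powr (- t)"

text \<open>Frequency of a mutation with fitness sigma that arose t generations ago:
  0 with probability P_lost([t],sigma), otherwise density g_{a(t,sigma,N)} on [0,1).
  Expectations E[X] and E[X(1-X)] of this random variable.\<close>
definition ExpX :: "(real \<Rightarrow> nat pmf) \<Rightarrow> real \<Rightarrow> real \<Rightarrow> real \<Rightarrow> real" where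
  "ExpX off t \<sigma> N = P_lost off (nat \<lfloor>t\<rfloor>) \<sigma> * 0
     + (1 - P_lost off (nat \<lfloor>t\<rfloor>) \<sigma>) * (LINT x:{0..<1}|lborel. x * g_dens (a_par off t \<sigma> N) x)"

definition ExpXX :: "(real \<Rightarrow> nat pmf) \<Rightarrow> real \<Rightarrow> real \<Rightarrow> real \<Rightarrow> real" where
  "ExpXX off t \<sigma> N = P_lost off (nat \<lfloor>t\<rfloor>) \<sigma> * 0
     + (1 - P_lost off (nat \<lfloor>t\<rfloor>) \<sigma>) * (LINT x:{0..<1}|lborel. x * (1 - x) * g_dens (a_par off t \<sigma> N) x)"

text \<open>Expected phenotypic mean and variance.  Given n mutations in (0,tau], the arrival
  time tau_i of the i-th (randomly labelled) mutation is uniform on (0,tau].\<close>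
definition Gbar :: "(real \<Rightarrow> nat pmf) \<Rightarrow> (real \<Rightarrow> real) \<Rightarrow> real \<Rightarrow> real \<Rightarrow> real \<Rightarrow> real \<Rightarrow> real" where
  "Gbar off f s N \<Theta> \<tau> = (\<Sum>n. Poi (\<Theta> * \<tau>) n * (\<Sum>i\<in>{1..n}.
      (LINT \<alpha>:{0<..}|lborel. \<alpha> *
         (\<integral>u. ExpX off (\<tau> - u) (exp (s * \<alpha>)) N \<partial>(uniform_measure lborel {0<..\<tau>})) * f \<alpha>)))"

definition VG :: "(real \<Rightarrow> nat pmf) \<Rightarrow> (real \<Rightarrow> real) \<Rightarrow> real \<Rightarrow> real \<Rightarrow> real \<Rightarrow> real \<Rightarrow> real" where
  "VG off f s N \<Theta> \<tau> = (\<Sum>n. Poi (\<Theta> * \<tau>) n * (\<Sum>i\<in>{1..n}.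
      (LINT \<alpha>:{0<..}|lborel. \<alpha>^2 *
         (\<integral>u. ExpXX off (\<tau> - u) (exp (s * \<alpha>)) N \<partial>(uniform_measure lborel {0<..\<tau>})) * f \<alpha>)))"

end

theory Submission
  imports Defs
begin

text \<open>Given \<open>n\<close> mutations, each arrival time is uniform on \<open>(0, \<tau>]\<close>, so the inner sum
  is \<open>n\<close> times the age-averaged contribution of one mutation. Averaging \<open>n\<close> over the Poisson
  law gives \<open>\<Theta> \<tau>\<close>, and the factor \<open>\<tau>\<close> cancels the uniform density \<open>1 / \<tau>\<close>. The
  expectations of \<open>X\<close> and \<open>X (1 - X)\<close> are \<open>1 - P_lost\<close> times the moments of \<open>x\<close> and
  \<open>x (1 - x)\<close> under \<open>g_a\<close>; the substitution \<open>z = a / (1 - x)\<close> turns \<open>g_a(x) dx\<close> into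
  \<open>exp (a - z) dz\<close> on \<open>(a, \<infinity>)\<close>, and since \<open>- exp (- z) / z\<close> is an antiderivative of
  \<open>exp (- z) / z\<^sup>2 + exp (- z) / z\<close>, both moments come out in terms of \<open>E\<^sub>1 a\<close>. If the
  mutation is lost almost surely both sides vanish; otherwise \<open>a > 0\<close>.\<close>

lemma sum_pmf_le_1: "sum (pmf p) A \<le> 1"
proof (cases "finite A")
  case True
  then have "sum (pmf p) A = measure (measure_pmf p) A"
    by (simp add: measure_measure_pmf_finite)
  then show ?thesis by simp
qed simp

lemma summable_pmf_nat: "summable (pmf (p :: nat pmf))"
  by (rule summableI_nonneg_bounded[where x = 1]) (simp_all add: sum_pmf_le_1)

lemma pgf_in_unit_interval:
  fixes p :: "nat pmf" and q :: real
  assumes q: "q \<in> {0..1}"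
  shows "(\<Sum>k. pmf p k * q ^ k) \<in> {0..1}"
proof -
  have le: "pmf p k * q ^ k \<le> pmf p k" and nonneg: "0 \<le> pmf p k * q ^ k" for k
    using q by (simp_all add: mult_left_le power_le_one)
  have summable: "summable (\<lambda>k. pmf p k * q ^ k)"
    by (rule summable_comparison_test[OF _ summable_pmf_nat]) (use le nonneg in auto)
  have "(\<Sum>k. pmf p k * q ^ k) \<le> (\<Sum>k. pmf p k)"
    by (rule suminf_le[OF le summable summable_pmf_nat])
  also have "\<dots> \<le> 1"
    by (rule suminf_le_const[OF summable_pmf_nat]) (rule sum_pmf_le_1)
  finally show ?thesis
    using suminf_nonneg[OF summable nonneg] by simp
qed

lemma P_lost_in_unit_interval: "P_lost off n \<sigma> \<in> {0..1}"
proof (induction n)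
  case (Suc n)
  then show ?case
    using pgf_in_unit_interval[of "P_lost off n \<sigma>" "off \<sigma>"] by simp
qed simp

lemma tendsto_exp_neg_at_top: "((\<lambda>x::real. exp (- x)) \<longlongrightarrow> 0) at_top"
  by (intro filterlim_compose[OF exp_at_bot] filterlim_uminus_at_bot_at_top)

lemma set_integral_Ioi_FTC_nonneg:
  fixes F f :: "real \<Rightarrow> real"
  assumes deriv: "\<And>x. a < x \<Longrightarrow> (F has_real_derivative f x) (at x)"
    and cont: "\<And>x. a < x \<Longrightarrow> isCont f x"
    and nonneg: "\<And>x. a < x \<Longrightarrow> 0 \<le> f x"
    and lim_a: "(F \<longlongrightarrow> A) (at_right a)"
    and lim_top: "(F \<longlongrightarrow> B) at_top"
  shows "set_integrable lborel {a<..} f" "(LINT x:{a<..}|lborel. f x) = B - A"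
proof -
  note FTC = interval_integral_FTC_nonneg[of "ereal a" \<infinity> F f A B]
  show "set_integrable lborel {a<..} f"
    using FTC(1) deriv cont nonneg lim_a lim_top by (simp add: ereal_tendsto_simps)
  show "(LINT x:{a<..}|lborel. f x) = B - A"
    using FTC(2) deriv cont nonneg lim_a lim_top
    by (simp add: ereal_tendsto_simps interval_lebesgue_integral_def)
qed

lemma set_integral_exp_neg_Ioi:
  fixes a :: real
  shows "set_integrable lborel {a<..} (\<lambda>z. exp (- z))"
    and "(LINT z:{a<..}|lborel. exp (- z)) = exp (- a)"
proof -
  have "((\<lambda>z. - exp (- z)) has_real_derivative exp (- x)) (at x)" for x :: real
    by (auto intro!: derivative_eq_intros)
  moreover have "isCont (\<lambda>z. exp (- z)) x" for x :: real
    by (intro continuous_intros)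
  moreover have "((\<lambda>z::real. - exp (- z)) \<longlongrightarrow> - exp (- a)) (at_right a)"
    by (intro tendsto_intros)
  moreover have "((\<lambda>z::real. - exp (- z)) \<longlongrightarrow> - 0) at_top"
    by (intro tendsto_minus tendsto_exp_neg_at_top)
  ultimately show "set_integrable lborel {a<..} (\<lambda>z. exp (- z))"
    and "(LINT z:{a<..}|lborel. exp (- z)) = exp (- a)"
    using set_integral_Ioi_FTC_nonneg[of a "\<lambda>z. - exp (- z)" "\<lambda>z. exp (- z)"] by simp_all
qed

lemma set_integral_exp_neg_div_Ioi:
  fixes a :: real
  assumes a: "a > 0"
  shows "set_integrable lborel {a<..} (\<lambda>z. exp (- z) / z^2 + exp (- z) / z)"
    and "(LINT z:{a<..}|lborel. exp (- z) / z^2 + exp (- z) / z) = exp (- a) / a"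
proof -
  let ?F = "\<lambda>z::real. - (exp (- z) / z)" and ?f = "\<lambda>z::real. exp (- z) / z^2 + exp (- z) / z"
  have "(?F has_real_derivative ?f x) (at x)" if "a < x" for x
    using that a by (auto intro!: derivative_eq_intros simp: field_simps power2_eq_square)
  moreover have "isCont ?f x" if "a < x" for x
    using that a by (intro continuous_intros) auto
  moreover have "0 \<le> ?f x" if "a < x" for x
    using that a by simp
  moreover have "(?F \<longlongrightarrow> - (exp (- a) / a)) (at_right a)"
    using a by (intro tendsto_intros) auto
  moreover have "(?F \<longlongrightarrow> - (0 * 0)) at_top"
    unfolding divide_inverse
    by (intro tendsto_minus tendsto_mult tendsto_exp_neg_at_top tendsto_inverse_0_at_top filterlim_ident)
  ultimately show "set_integrable lborel {a<..} ?f" and "(LINT z:{a<..}|lborel. ?f z) = exp (- a) / a"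
    using set_integral_Ioi_FTC_nonneg[of a ?F ?f] by simp_all
qed

lemma set_integral_exp_neg_div_square_Ioi:
  fixes a :: real
  assumes a: "a > 0"
  shows "set_integrable lborel {a<..} (\<lambda>z. exp (- z) / z)"
    and "set_integrable lborel {a<..} (\<lambda>z. exp (- z) / z^2)"
    and "(LINT z:{a<..}|lborel. exp (- z) / z^2) = exp (- a) / a - E1 a"
proof -
  note sum = set_integral_exp_neg_div_Ioi[OF a]
  show E1_integrable: "set_integrable lborel {a<..} (\<lambda>z. exp (- z) / z)"
  proof (rule set_integrable_bound[OF sum(1)])
    show "set_borel_measurable lborel {a<..} (\<lambda>z. exp (- z) / z)"
      unfolding set_borel_measurable_def by measurable
    show "AE z in lborel. z \<in> {a<..} \<longrightarrow> norm (exp (- z) / z) \<le> norm (exp (- z) / z^2 + exp (- z) / z)"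
      by (rule AE_I2) (use a in auto)
  qed
  have diff: "(\<lambda>z. exp (- z) / z^2) = (\<lambda>z. (exp (- z) / z^2 + exp (- z) / z) - exp (- z) / z)"
    by simp
  show "set_integrable lborel {a<..} (\<lambda>z. exp (- z) / z^2)"
    unfolding diff using sum(1) E1_integrable by (rule set_integral_diff(1))
  show "(LINT z:{a<..}|lborel. exp (- z) / z^2) = exp (- a) / a - E1 a"
    unfolding diff set_integral_diff(2)[OF sum(1) E1_integrable] sum(2) E1_def ..
qed

lemma set_integral_g_dens_substitution:
  fixes w :: "real \<Rightarrow> real"
  assumes a: "a > 0"
    and cont: "\<And>x. 0 < x \<Longrightarrow> x < 1 \<Longrightarrow> isCont w x"
    and nonneg: "\<And>x. 0 < x \<Longrightarrow> x < 1 \<Longrightarrow> 0 \<le> w x"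
    and w0: "w 0 = 0"
    and integrable: "set_integrable lborel {a<..} (\<lambda>z. w (1 - a / z) * exp (a - z))"
  shows "(LINT x:{0..<1}|lborel. w x * g_dens a x) = (LINT z:{a<..}|lborel. w (1 - a / z) * exp (a - z))"
proof -
  let ?g = "\<lambda>z. 1 - a / z" and ?g' = "\<lambda>z. a / z^2"
  have jacobian: "w (?g z) * g_dens a (?g z) * ?g' z = w (?g z) * exp (a - z)" if "z \<in> {a<..}" for z
  proof -
    have "- a * ?g z / (1 - ?g z) = a - z"
      using that a by (simp add: field_simps)
    then show ?thesis
      unfolding g_dens_def using that a by (simp add: field_simps power2_eq_square)
  qed
  have in_unit: "0 < ?g z" "?g z < 1" if "a < z" for z
    using that a by (auto simp: field_simps)
  have substitution:
    "(LBINT x=ereal 0..ereal 1. w x * g_dens a x) = (LBINT z=ereal a..\<infinity>. w (?g z) * g_dens a (?g z) * ?g' z)"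
  proof (rule interval_integral_substitution_nonneg(2))
    show "((ereal \<circ> ?g \<circ> real_of_ereal) \<longlongrightarrow> ereal 0) (at_right (ereal a))"
      unfolding ereal_tendsto_simps using a by (auto intro!: tendsto_eq_intros)
    show "((ereal \<circ> ?g \<circ> real_of_ereal) \<longlongrightarrow> ereal 1) (at_left \<infinity>)"
      unfolding ereal_tendsto_simps
      using tendsto_diff[OF tendsto_const tendsto_divide_0[OF tendsto_const filterlim_ident[THEN filterlim_at_top_imp_at_infinity]], of 1 a]
      by simp
    show "set_integrable lborel (einterval (ereal a) \<infinity>) (\<lambda>z. w (?g z) * g_dens a (?g z) * ?g' z)"
      using integrable by (simp only: einterval_eq_Ici set_integrable_cong[OF refl refl jacobian])
  next
    fix z assume "ereal a < ereal z" "ereal z < \<infinity>"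
    then have z: "a < z" by simp
    show "(?g has_real_derivative ?g' z) (at z)"
      using z a by (auto intro!: derivative_eq_intros simp: field_simps power2_eq_square)
    show "isCont (\<lambda>x. w x * g_dens a x) (?g z)"
      unfolding g_dens_def using in_unit[OF z] cont[OF in_unit[OF z]] by (intro continuous_intros) auto
    show "isCont ?g' z" using z a by (intro continuous_intros) auto
    show "0 \<le> w (?g z) * g_dens a (?g z)"
      unfolding g_dens_def using in_unit[OF z] nonneg[OF in_unit[OF z]] a by simp
  qed (use a in auto)
  have "(LINT x:{0..<1}|lborel. w x * g_dens a x) = (LINT x:{0<..<1}|lborel. w x * g_dens a x)"
    unfolding set_lebesgue_integral_def
    by (rule Bochner_Integration.integral_cong) (auto simp: indicator_def w0)
  also have "\<dots> = (LINT z:{a<..}|lborel. w (?g z) * g_dens a (?g z) * ?g' z)"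
    using substitution by (simp add: interval_lebesgue_integral_def)
  also have "\<dots> = (LINT z:{a<..}|lborel. w (?g z) * exp (a - z))"
    using jacobian by (intro set_lebesgue_integral_cong) auto
  finally show ?thesis .
qed

lemma set_integral_x_g_dens:
  fixes a :: real
  assumes a: "a > 0"
  shows "(LINT x:{0..<1}|lborel. x * g_dens a x) = gamma1 a"
proof -
  have integrand: "(1 - a / z) * exp (a - z) = exp a * exp (- z) - a * exp a * (exp (- z) / z)"
    if "z \<in> {a<..}" for z
    using that a by (simp add: field_simps exp_diff exp_minus)
  have integrable: "set_integrable lborel {a<..} (\<lambda>z. exp a * exp (- z))"
    "set_integrable lborel {a<..} (\<lambda>z. a * exp a * (exp (- z) / z))"
    by (intro set_integrable_mult_right set_integral_exp_neg_Ioi(1) set_integral_exp_neg_div_square_Ioi(1)[OF a])+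
  have "(LINT x:{0..<1}|lborel. x * g_dens a x) = (LINT z:{a<..}|lborel. (1 - a / z) * exp (a - z))"
  proof (rule set_integral_g_dens_substitution[OF a])
    show "set_integrable lborel {a<..} (\<lambda>z. (1 - a / z) * exp (a - z))"
      using set_integral_diff(1)[OF integrable] by (simp only: set_integrable_cong[OF refl refl integrand])
  qed auto
  also have "\<dots> = (LINT z:{a<..}|lborel. exp a * exp (- z) - a * exp a * (exp (- z) / z))"
    using integrand by (intro set_lebesgue_integral_cong) auto
  also have "\<dots> = exp a * exp (- a) - a * exp a * E1 a"
    by (simp only: set_integral_diff(2)[OF integrable] set_integral_mult_right set_integral_exp_neg_Ioi(2) E1_def)
  also have "\<dots> = gamma1 a"
    by (simp add: gamma1_def exp_minus)
  finally show ?thesis .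
qed

lemma set_integral_x_one_minus_x_g_dens:
  fixes a :: real
  assumes a: "a > 0"
  shows "(LINT x:{0..<1}|lborel. x * (1 - x) * g_dens a x) = gammaV a"
proof -
  have integrand: "(1 - a / z) * (1 - (1 - a / z)) * exp (a - z)
      = a * exp a * (exp (- z) / z) - a^2 * exp a * (exp (- z) / z^2)" if "z \<in> {a<..}" for z
    using that a by (simp add: field_simps exp_diff exp_minus power2_eq_square)
  have integrable: "set_integrable lborel {a<..} (\<lambda>z. a * exp a * (exp (- z) / z))"
    "set_integrable lborel {a<..} (\<lambda>z. a^2 * exp a * (exp (- z) / z^2))"
    by (intro set_integrable_mult_right set_integral_exp_neg_div_square_Ioi(1,2)[OF a])+
  have "(LINT x:{0..<1}|lborel. x * (1 - x) * g_dens a x)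
      = (LINT z:{a<..}|lborel. (1 - a / z) * (1 - (1 - a / z)) * exp (a - z))"
  proof (rule set_integral_g_dens_substitution[OF a])
    show "set_integrable lborel {a<..} (\<lambda>z. (1 - a / z) * (1 - (1 - a / z)) * exp (a - z))"
      using set_integral_diff(1)[OF integrable] by (simp only: set_integrable_cong[OF refl refl integrand])
  qed auto
  also have "\<dots> = (LINT z:{a<..}|lborel. a * exp a * (exp (- z) / z) - a^2 * exp a * (exp (- z) / z^2))"
    using integrand by (intro set_lebesgue_integral_cong) auto
  also have "\<dots> = a * exp a * E1 a - a^2 * exp a * (exp (- a) / a - E1 a)"
    by (simp only: set_integral_diff(2)[OF integrable] set_integral_mult_right
        set_integral_exp_neg_div_square_Ioi(3)[OF a] E1_def)
  also have "\<dots> = gammaV a"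
    using a by (simp add: gammaV_def exp_minus field_simps power2_eq_square)
  finally show ?thesis .
qed

lemma borel_measurable_E1 [measurable]: "E1 \<in> borel_measurable borel"
proof -
  have "(\<lambda>(a, x). indicator {a<..} x *\<^sub>R (exp (- x) / x))
      = (\<lambda>p :: real \<times> real. if fst p < snd p then exp (- snd p) / snd p else 0)"
    by (auto simp: fun_eq_iff indicator_def)
  moreover have "(\<lambda>p :: real \<times> real. if fst p < snd p then exp (- snd p) / snd p else 0)
      \<in> borel_measurable (borel \<Otimes>\<^sub>M lborel)"
    by measurable
  ultimately show ?thesis
    unfolding E1_def[abs_def] set_lebesgue_integral_def
    by (intro lborel.borel_measurable_lebesgue_integral) simp
qed

lemma borel_measurable_P_lost_floor [measurable]:
  "(\<lambda>t::real. P_lost off (nat \<lfloor>t\<rfloor>) \<sigma>) \<in> borel_measurable borel"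
  by (rule measurable_compose[where f = "\<lambda>t. nat \<lfloor>t\<rfloor>" and N = "count_space UNIV"]) auto

lemma borel_measurable_a_par [measurable]: "(\<lambda>t. a_par off t \<sigma> N) \<in> borel_measurable borel"
  unfolding a_par_def by measurable

lemma borel_measurable_gamma1 [measurable]: "gamma1 \<in> borel_measurable borel"
  unfolding gamma1_def[abs_def] by measurable

lemma borel_measurable_gammaV [measurable]: "gammaV \<in> borel_measurable borel"
  unfolding gammaV_def[abs_def] by measurable

lemma a_par_pos:
  assumes "\<sigma> > 0" "N > 0" "P_lost off (nat \<lfloor>t\<rfloor>) \<sigma> < 1"
  shows "a_par off t \<sigma> N > 0"
  using assms by (simp add: a_par_def)

lemma ExpX_eq_gamma1:
  assumes "\<sigma> > 0" "N > 0"
  shows "ExpX off t \<sigma> N = (1 - P_lost off (nat \<lfloor>t\<rfloor>) \<sigma>) * gamma1 (a_par off t \<sigma> N)"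
proof (cases "P_lost off (nat \<lfloor>t\<rfloor>) \<sigma> = 1")
  case False
  then have "a_par off t \<sigma> N > 0"
    using assms P_lost_in_unit_interval[of off "nat \<lfloor>t\<rfloor>" \<sigma>] by (intro a_par_pos) auto
  then show ?thesis by (simp add: ExpX_def set_integral_x_g_dens)
qed (simp add: ExpX_def)

lemma ExpXX_eq_gammaV:
  assumes "\<sigma> > 0" "N > 0"
  shows "ExpXX off t \<sigma> N = (1 - P_lost off (nat \<lfloor>t\<rfloor>) \<sigma>) * gammaV (a_par off t \<sigma> N)"
proof (cases "P_lost off (nat \<lfloor>t\<rfloor>) \<sigma> = 1")
  case False
  then have "a_par off t \<sigma> N > 0"
    using assms P_lost_in_unit_interval[of off "nat \<lfloor>t\<rfloor>" \<sigma>] by (intro a_par_pos) auto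
  then show ?thesis by (simp add: ExpXX_def set_integral_x_one_minus_x_g_dens)
qed (simp add: ExpXX_def)

lemma integral_uniform_measure_Ioc:
  fixes g :: "real \<Rightarrow> real"
  assumes ab: "a < b" and g: "g \<in> borel_measurable borel"
  shows "(\<integral>u. g u \<partial>uniform_measure lborel {a<..b}) = (LINT u:{a<..b}|lborel. g u) / (b - a)"
proof -
  have "1 / ennreal (b - a) = ennreal (1 / (b - a))"
    using ab divide_ennreal[of 1 "b - a"] by simp
  then have "uniform_measure lborel {a<..b} = density lborel (\<lambda>u. ennreal (indicator {a<..b} u / (b - a)))"
    unfolding uniform_measure_def using ab
    by (intro arg_cong[where f = "density lborel"]) (auto simp: fun_eq_iff indicator_def divide_ennreal)
  then show ?thesis
    using ab g by (simp add: integral_density set_lebesgue_integral_def)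
qed

lemma set_integral_reflect_Ioc:
  fixes h :: "real \<Rightarrow> real"
  shows "(LINT u:{0<..\<tau>}|lborel. h (\<tau> - u)) = (LINT t:{0..<\<tau>}|lborel. h t)"
proof -
  have "(LINT t:{0..<\<tau>}|lborel. h t)
      = \<bar>-1\<bar> *\<^sub>R (\<integral>u. indicator {0..<\<tau>} (\<tau> + (-1) * u) *\<^sub>R h (\<tau> + (-1) * u) \<partial>lborel)"
    unfolding set_lebesgue_integral_def by (rule lborel_integral_real_affine) simp
  also have "\<dots> = (LINT u:{0<..\<tau>}|lborel. h (\<tau> - u))"
    unfolding set_lebesgue_integral_def
    by (auto intro!: Bochner_Integration.integral_cong simp: indicator_def)
  finally show ?thesis ..
qed

lemma integral_uniform_arrival_time:
  fixes h :: "real \<Rightarrow> real"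
  assumes tau: "\<tau> \<ge> 0" and h: "h \<in> borel_measurable borel"
  shows "\<tau> * (\<integral>u. h (\<tau> - u) \<partial>uniform_measure lborel {0<..\<tau>}) = (LINT t:{0..\<tau>}|lborel. h t)"
proof (cases "\<tau> = 0")
  case True
  have "(LINT t:{0..0}|lborel. h t) = (LINT t:{}|lborel. h t)"
    by (rule set_integral_discrete_difference[where X = "{0}"]) auto
  then show ?thesis using True by (simp add: set_lebesgue_integral_def)
next
  case False
  then have "\<tau> > 0" using tau by simp
  have "(LINT t:{0..\<tau>}|lborel. h t) = (LINT t:{0..<\<tau>}|lborel. h t)"
    by (rule set_integral_discrete_difference[where X = "{\<tau>}"]) auto
  then show ?thesis
    using \<open>\<tau> > 0\<close> h by (simp add: integral_uniform_measure_Ioc set_integral_reflect_Ioc)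
qed

lemma Poi_mean: "(\<lambda>n. real n * Poi m n) sums m"
proof -
  have "(\<lambda>n. m * exp (- m) * (m ^ n /\<^sub>R fact n)) sums (m * exp (- m) * exp m)"
    by (rule sums_mult[OF exp_converges])
  then have "(\<lambda>n. real (Suc n) * Poi m (Suc n)) sums m"
    by (simp add: Poi_def exp_minus field_simps del: of_nat_Suc)
  then show ?thesis
    by (subst (asm) sums_Suc_iff) simp
qed

lemma suminf_Poi_times_count: "(\<Sum>n. Poi m n * (\<Sum>i\<in>{1..n}. c)) = m * c"
proof -
  have "(\<lambda>n. Poi m n * (\<Sum>i\<in>{1..n}. c)) sums (m * c)"
    using sums_mult2[OF Poi_mean[of m], of c] by (simp add: mult_ac)
  then show ?thesis by (rule sums_unique[symmetric])
qed

lemma Poisson_uniform_arrivals_sum: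
  fixes w f :: "real \<Rightarrow> real" and h :: "real \<Rightarrow> real \<Rightarrow> real"
  assumes tau: "\<tau> \<ge> 0" and h: "\<And>\<alpha>. h \<alpha> \<in> borel_measurable borel"
  shows "(\<Sum>n. Poi (\<Theta> * \<tau>) n * (\<Sum>i\<in>{1..n}.
            LINT \<alpha>:{0<..}|lborel. w \<alpha> * (\<integral>u. h \<alpha> (\<tau> - u) \<partial>uniform_measure lborel {0<..\<tau>}) * f \<alpha>))
       = \<Theta> * (LINT \<alpha>:{0<..}|lborel. w \<alpha> * f \<alpha> * (LINT t:{0..\<tau>}|lborel. h \<alpha> t))"
    (is "?lhs = _")
proof -
  have "?lhs = \<Theta> * (\<tau> * (LINT \<alpha>:{0<..}|lborel.
      w \<alpha> * (\<integral>u. h \<alpha> (\<tau> - u) \<partial>uniform_measure lborel {0<..\<tau>}) * f \<alpha>))"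
    by (simp only: suminf_Poi_times_count mult.assoc)
  also have "\<tau> * (LINT \<alpha>:{0<..}|lborel. w \<alpha> * (\<integral>u. h \<alpha> (\<tau> - u) \<partial>uniform_measure lborel {0<..\<tau>}) * f \<alpha>)
      = (LINT \<alpha>:{0<..}|lborel. w \<alpha> * f \<alpha> * (\<tau> * (\<integral>u. h \<alpha> (\<tau> - u) \<partial>uniform_measure lborel {0<..\<tau>})))"
    by (simp flip: set_integral_mult_right add: ac_simps)
  also have "\<dots> = (LINT \<alpha>:{0<..}|lborel. w \<alpha> * f \<alpha> * (LINT t:{0..\<tau>}|lborel. h \<alpha> t))"
    by (simp only: integral_uniform_arrival_time[OF tau h])
  finally show ?thesis .
qed

theorem mainTheorem1:
  fixes off :: "real \<Rightarrow> nat pmf" and f :: "real \<Rightarrow> real"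
    and s \<Theta> \<tau> :: real and N :: nat
  assumes N: "N \<ge> 1"
    and s: "s > 0" and Theta: "\<Theta> > 0" and tau: "\<tau> \<ge> 0"
    and off_mean: "\<And>\<sigma>. \<sigma> > 1 \<Longrightarrow> integrable (measure_pmf (off \<sigma>)) real
                         \<and> measure_pmf.expectation (off \<sigma>) real = \<sigma>"
    and off_meas: "\<And>k. (\<lambda>\<sigma>. pmf (off \<sigma>) k) \<in> borel_measurable borel"
    and f_meas: "f \<in> borel_measurable borel"
    and f_nonneg: "\<And>\<alpha>. \<alpha> > 0 \<Longrightarrow> f \<alpha> \<ge> 0"
    and f_prob: "(LINT \<alpha>:{0<..}|lborel. f \<alpha>) = 1"
    and f_moments: "\<And>k::nat. set_integrable lborel {0<..} (\<lambda>\<alpha>. \<alpha> ^ k * f \<alpha>)"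
  shows "Gbar off f s (real N) \<Theta> \<tau> =
           \<Theta> * (LINT \<alpha>:{0<..}|lborel. \<alpha> * f \<alpha> *
              (LINT t:{0..\<tau>}|lborel. (1 - P_lost off (nat \<lfloor>t\<rfloor>) (exp (s * \<alpha>)))
                   * gamma1 (a_par off t (exp (s * \<alpha>)) (real N))))
       \<and> VG off f s (real N) \<Theta> \<tau> =
           \<Theta> * (LINT \<alpha>:{0<..}|lborel. \<alpha>^2 * f \<alpha> *
              (LINT t:{0..\<tau>}|lborel. (1 - P_lost off (nat \<lfloor>t\<rfloor>) (exp (s * \<alpha>)))
                   * gammaV (a_par off t (exp (s * \<alpha>)) (real N))))"
proof -
  \<comment> \<open>Only the integrands are rewritten, pointwise in \<open>\<alpha>\<close> and \<open>t\<close>.\<close>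
  have N_pos: "real N > 0" using N by simp
  have "Gbar off f s (real N) \<Theta> \<tau> = \<Theta> * (LINT \<alpha>:{0<..}|lborel. \<alpha> * f \<alpha> *
      (LINT t:{0..\<tau>}|lborel. ExpX off t (exp (s * \<alpha>)) (real N)))"
    unfolding Gbar_def
    by (rule Poisson_uniform_arrivals_sum[OF tau])
      (unfold ExpX_eq_gamma1[OF exp_gt_zero N_pos], measurable)
  moreover have "VG off f s (real N) \<Theta> \<tau> = \<Theta> * (LINT \<alpha>:{0<..}|lborel. \<alpha>^2 * f \<alpha> *
      (LINT t:{0..\<tau>}|lborel. ExpXX off t (exp (s * \<alpha>)) (real N)))"
    unfolding VG_def
    by (rule Poisson_uniform_arrivals_sum[OF tau])
      (unfold ExpXX_eq_gammaV[OF exp_gt_zero N_pos], measurable)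
  ultimately show ?thesis
    by (simp add: ExpX_eq_gamma1[OF exp_gt_zero N_pos] ExpXX_eq_gammaV[OF exp_gt_zero N_pos])
qed

end
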